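(* Let $n\ge 1$ and let $\pi=\pi_1\pi_2\cdots\pi_n\in S_n$ be a permutation of $\{1,\dots,n\}$ (so $\pi_i=\pi(i)$). Let $$M=\{\pi_j-i \;:\; 1\le i<j\le n,\ \pi_i>\pi_j\}$$ and let $m=\#M$ be the number of distinct elements of $M$. Then there exist at most $m$ permutations $\rho^1,\rho^2,\dots$ of bandwidth $1$ (i.e. $|\rho^j_i-i|\le 1$ for all $i$) such that $\pi=\rho^1\rho^2\cdots$ (product in $S_n$; when $m=0$, $\pi$ is the identity, the empty product).
   Context: A permutation $\rho\in S_n$ has bandwidth $w$ if $|\rho_i-i|\le w$ for all $i$; equivalently its permutation matrix $P$ (with $P_{i,\rho_i}=1$ and all other entries $0$) satisfies $P_{i,j}=0$ whenever $|i-j|>w$. *)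

theory Defs
  imports "HOL-Combinatorics.Permutations"
begin

definition has_bandwidth :: "nat \<Rightarrow> nat \<Rightarrow> (nat \<Rightarrow> nat) \<Rightarrow> bool" where
  "has_bandwidth n w \<rho> \<longleftrightarrow> \<rho> permutes {1..n} \<and> (\<forall>i\<in>{1..n}. \<bar>int (\<rho> i) - int i\<bar> \<le> int w)"

definition inv_set :: "nat \<Rightarrow> (nat \<Rightarrow> nat) \<Rightarrow> int set" where
  "inv_set n \<pi> = {int (\<pi> j) - int i | i j. 1 \<le> i \<and> i < j \<and> j \<le> n \<and> \<pi> i > \<pi> j}"

end

theory Submission
  imports Defs
begin

(*
  Write \<sigma> = inv \<pi>.  For an integer parameter d, order {1..n} by the key
  x \<mapsto> min x (\<sigma> x + d), ties broken by \<sigma>, and let R_d be the permutation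
  sending x to its rank in this order.  For d \<le> 1 - n the key is \<sigma> x + d, so
  R_d = \<sigma>; for d \<ge> n - 1 the key is x, so R_d = id.  Passing from d to d + 1
  flips, for each x, the relative order of x with at most one other element,
  and any flip exhibits d as an element of M = inv_set n \<pi>.  Consequently each
  step R_{d+1} \<circ> inv R_d has bandwidth 1 and is the identity unless d \<in> M.
  Telescoping, \<pi> = inv \<sigma> is the product of these steps over d = 1-n .. n-2,
  and discarding the identity factors leaves at most card M of them.
*)

definition order_rank :: "nat \<Rightarrow> (nat \<Rightarrow> nat \<Rightarrow> bool) \<Rightarrow> nat \<Rightarrow> nat" where
  "order_rank n R x = (if x \<in> {1..n} then card {y\<in>{1..n}. R y x} + 1 else x)"

lemma order_rank_of_permutation:
  assumes g: "g permutes {1..n}"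
  shows "order_rank n (\<lambda>y x. g y < g x) = g"
proof
  fix x
  show "order_rank n (\<lambda>y x. g y < g x) x = g x"
  proof (cases "x \<in> {1..n}")
    case True
    have gx: "g x \<in> {1..n}" using permutes_in_image[OF g] True by simp
    have "g ` {y\<in>{1..n}. g y < g x} = {v\<in>g ` {1..n}. v < g x}" by auto
    also have "\<dots> = {1..<g x}" using permutes_image[OF g] gx by auto
    finally have "card {y\<in>{1..n}. g y < g x} = card {1..<g x}"
      using card_image inj_on_subset[OF permutes_inj_on[OF g]] by (metis (no_types, lifting) mem_Collect_eq subsetI)
    then show ?thesis using True gx by (simp add: order_rank_def)
  next
    case False
    show ?thesis unfolding order_rank_def if_not_P[OF False] by (simp add: permutes_not_in[OF g False])
  qed
qed

lemma order_rank_permutes: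
  assumes trans: "\<And>x y z. R x y \<Longrightarrow> R y z \<Longrightarrow> R x z"
    and irrefl: "\<And>x. \<not> R x x"
    and total: "\<And>x y. x \<in> {1..n} \<Longrightarrow> y \<in> {1..n} \<Longrightarrow> x \<noteq> y \<Longrightarrow> R x y \<or> R y x"
  shows "order_rank n R permutes {1..n}"
proof -
  have rank_less: "order_rank n R a < order_rank n R b"
    if "a \<in> {1..n}" "b \<in> {1..n}" "R a b" for a b
  proof -
    have "{z\<in>{1..n}. R z a} \<subset> {z\<in>{1..n}. R z b}"
      using that trans irrefl by blast
    then show ?thesis using that psubset_card_mono[of "{z\<in>{1..n}. R z b}"]
      by (simp add: order_rank_def)
  qed
  have inj: "inj_on (order_rank n R) {1..n}"
    by (rule inj_onI) (metis total rank_less less_irrefl)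
  have "order_rank n R x \<in> {1..n}" if x: "x \<in> {1..n}" for x
  proof -
    have "{y\<in>{1..n}. R y x} \<subseteq> {1..n} - {x}" using irrefl by auto
    then have "card {y\<in>{1..n}. R y x} \<le> n - 1"
      using card_mono[of "{1..n} - {x}"] x by fastforce
    then show ?thesis using x by (auto simp: order_rank_def)
  qed
  then have "order_rank n R ` {1..n} = {1..n}"
    using endo_inj_surj[OF _ _ inj] by blast
  then show ?thesis
    using inj by (intro bij_imp_permutes) (auto simp: bij_betw_def order_rank_def)
qed

lemma order_rank_close:
  assumes x: "x \<in> {1..n}"
    and unique: "\<And>y z. y \<in> {1..n} \<Longrightarrow> z \<in> {1..n} \<Longrightarrow>
                   R y x \<noteq> S y x \<Longrightarrow> R z x \<noteq> S z x \<Longrightarrow> y = z"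
  shows "\<bar>int (order_rank n S x) - int (order_rank n R x)\<bar> \<le> 1"
proof -
  define A where "A = {y\<in>{1..n}. S y x}"
  define B where "B = {y\<in>{1..n}. R y x}"
  define D where "D = {y\<in>{1..n}. R y x \<noteq> S y x}"
  have "card D \<le> 1"
    using unique by (auto simp: D_def card_le_Suc0_iff_eq)
  moreover have "card A \<le> card B + card D"
    by (rule order_trans[OF card_mono card_Un_le]) (auto simp: A_def B_def D_def)
  moreover have "card B \<le> card A + card D"
    by (rule order_trans[OF card_mono card_Un_le]) (auto simp: A_def B_def D_def)
  ultimately show ?thesis using x by (simp add: order_rank_def A_def B_def)
qed

lemma foldr_telescope:
  assumes "\<And>k. inj (P k)"
  shows "foldr (\<circ>) (rev (map (\<lambda>k. P (Suc k) \<circ> inv (P k)) [0..<t])) id \<circ> P 0 = P t"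
proof (induction t)
  case 0
  then show ?case by simp
next
  case (Suc t)
  have "foldr (\<circ>) (rev (map (\<lambda>k. P (Suc k) \<circ> inv (P k)) [0..<Suc t])) id \<circ> P 0
        = P (Suc t) \<circ> inv (P t) \<circ> (foldr (\<circ>) (rev (map (\<lambda>k. P (Suc k) \<circ> inv (P k)) [0..<t])) id \<circ> P 0)"
    by (simp add: comp_assoc)
  also have "\<dots> = P (Suc t)"
    by (simp add: Suc.IH comp_assoc inv_o_cancel[OF assms])
  finally show ?case .
qed

lemma foldr_filter_id: "foldr (\<circ>) (filter (\<lambda>f. f \<noteq> id) fs) id = foldr (\<circ>) fs id"
  by (induction fs) auto

lemma length_filter_nonid_le_card:
  assumes "finite M" and "inj f" and "\<And>k. k < t \<Longrightarrow> s k \<noteq> id \<Longrightarrow> f k \<in> M"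
  shows "length (filter (\<lambda>g. g \<noteq> id) (rev (map s [0..<t]))) \<le> card M"
proof -
  have "length (filter (\<lambda>g. g \<noteq> id) (rev (map s [0..<t]))) = card {k. k < t \<and> s k \<noteq> id}"
    by (simp add: rev_filter[symmetric] filter_map o_def length_filter_conv_card cong: conj_cong)
  also have "\<dots> \<le> card M"
    using assms by (intro card_inj_on_le[of f]) (auto intro: inj_on_subset)
  finally show ?thesis .
qed

definition sweep_key :: "(nat \<Rightarrow> nat) \<Rightarrow> int \<Rightarrow> nat \<Rightarrow> int" where
  "sweep_key \<sigma> d x = min (int x) (int (\<sigma> x) + d)"

definition sweep_less :: "(nat \<Rightarrow> nat) \<Rightarrow> int \<Rightarrow> nat \<Rightarrow> nat \<Rightarrow> bool" where
  "sweep_less \<sigma> d y x \<longleftrightarrow>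
     sweep_key \<sigma> d y < sweep_key \<sigma> d x \<or> (sweep_key \<sigma> d y = sweep_key \<sigma> d x \<and> \<sigma> y < \<sigma> x)"

definition sweep_rank :: "nat \<Rightarrow> (nat \<Rightarrow> nat) \<Rightarrow> int \<Rightarrow> nat \<Rightarrow> nat" where
  "sweep_rank n \<sigma> d = order_rank n (sweep_less \<sigma> d)"

definition sweep_step :: "nat \<Rightarrow> (nat \<Rightarrow> nat) \<Rightarrow> int \<Rightarrow> nat \<Rightarrow> nat" where
  "sweep_step n \<sigma> d = sweep_rank n \<sigma> (d + 1) \<circ> inv (sweep_rank n \<sigma> d)"

lemma sweep_rank_permutes:
  assumes \<sigma>: "\<sigma> permutes {1..n}"
  shows "sweep_rank n \<sigma> d permutes {1..n}"
  unfolding sweep_rank_def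
proof (rule order_rank_permutes)
  fix x y assume "x \<in> {1..n}" "y \<in> {1..n}" "x \<noteq> y"
  then have "\<sigma> x \<noteq> \<sigma> y" using permutes_inj_on[OF \<sigma>] by (meson inj_onD)
  then show "sweep_less \<sigma> d x y \<or> sweep_less \<sigma> d y x"
    unfolding sweep_less_def by linarith
qed (auto simp: sweep_less_def)

lemma sweep_rank_start:
  assumes \<sigma>: "\<sigma> permutes {1..n}" and d: "d \<le> 1 - int n"
  shows "sweep_rank n \<sigma> d = \<sigma>"
proof -
  have "sweep_key \<sigma> d x = int (\<sigma> x) + d" if "x \<in> {1..n}" for x
    using permutes_in_image[OF \<sigma>, of x] that d by (auto simp: sweep_key_def)
  then have "{y\<in>{1..n}. sweep_less \<sigma> d y x} = {y\<in>{1..n}. \<sigma> y < \<sigma> x}" if "x \<in> {1..n}" for x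
    using that by (auto simp: sweep_less_def)
  then have "sweep_rank n \<sigma> d = order_rank n (\<lambda>y x. \<sigma> y < \<sigma> x)"
    by (auto simp: sweep_rank_def order_rank_def)
  then show ?thesis using order_rank_of_permutation[OF \<sigma>] by simp
qed

lemma sweep_rank_end:
  assumes \<sigma>: "\<sigma> permutes {1..n}" and d: "int n - 1 \<le> d"
  shows "sweep_rank n \<sigma> d = id"
proof -
  have "sweep_key \<sigma> d x = int x" if "x \<in> {1..n}" for x
    using permutes_in_image[OF \<sigma>, of x] that d by (auto simp: sweep_key_def)
  then have "{y\<in>{1..n}. sweep_less \<sigma> d y x} = {y\<in>{1..n}. id y < id x}" if "x \<in> {1..n}" for x
    using that by (auto simp: sweep_less_def)
  then have "sweep_rank n \<sigma> d = order_rank n (\<lambda>y x. id y < id x)"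
    by (auto simp: sweep_rank_def order_rank_def)
  then show ?thesis using order_rank_of_permutation[OF permutes_id] by simp
qed

text \<open>A pair x, y changes its relative order between parameters d and d + 1
  only if one of them, say y, lies after x while \<sigma> y < \<sigma> x, and x - \<sigma> y = d:
  exactly the configuration of an inversion of inv \<sigma> with value d.\<close>
lemma sweep_flip:
  assumes \<sigma>: "\<sigma> permutes {1..n}" and xy: "x \<in> {1..n}" "y \<in> {1..n}"
    and flip: "sweep_less \<sigma> d y x \<noteq> sweep_less \<sigma> (d + 1) y x"
  shows "(\<sigma> y < \<sigma> x \<and> x < y \<and> int x - int (\<sigma> y) = d)
       \<or> (\<sigma> x < \<sigma> y \<and> y < x \<and> int y - int (\<sigma> x) = d)"
proof -
  have "x \<noteq> y" using flip by (auto simp: sweep_less_def)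
  then have "int (\<sigma> x) \<noteq> int (\<sigma> y)"
    using permutes_inj_on[OF \<sigma>] xy by (auto dest: inj_onD)
  then show ?thesis using flip \<open>x \<noteq> y\<close>
    unfolding sweep_less_def sweep_key_def min_def by (smt (verit) of_nat_less_iff)
qed

lemma sweep_flip_in_inv_set:
  assumes \<sigma>: "\<sigma> permutes {1..n}" and xy: "x \<in> {1..n}" "y \<in> {1..n}"
    and flip: "sweep_less \<sigma> d y x \<noteq> sweep_less \<sigma> (d + 1) y x"
  shows "d \<in> inv_set n (inv \<sigma>)"
proof -
  have inv_\<sigma>: "inv \<sigma> (\<sigma> z) = z" for z using permutes_inverses(2)[OF \<sigma>] .
  have range: "\<sigma> x \<in> {1..n}" "\<sigma> y \<in> {1..n}" using permutes_in_image[OF \<sigma>] xy by auto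
  from sweep_flip[OF assms] show ?thesis
  proof
    assume "\<sigma> y < \<sigma> x \<and> x < y \<and> int x - int (\<sigma> y) = d"
    then show ?thesis unfolding inv_set_def using range inv_\<sigma>[of x] inv_\<sigma>[of y]
      by (intro CollectI exI[of _ "\<sigma> y"] exI[of _ "\<sigma> x"]) auto
  next
    assume "\<sigma> x < \<sigma> y \<and> y < x \<and> int y - int (\<sigma> x) = d"
    then show ?thesis unfolding inv_set_def using range inv_\<sigma>[of x] inv_\<sigma>[of y]
      by (intro CollectI exI[of _ "\<sigma> x"] exI[of _ "\<sigma> y"]) auto
  qed
qed

lemma sweep_flip_unique:
  assumes \<sigma>: "\<sigma> permutes {1..n}" and x: "x \<in> {1..n}" and yz: "y \<in> {1..n}" "z \<in> {1..n}"
    and flip_y: "sweep_less \<sigma> d y x \<noteq> sweep_less \<sigma> (d + 1) y x"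
    and flip_z: "sweep_less \<sigma> d z x \<noteq> sweep_less \<sigma> (d + 1) z x"
  shows "y = z"
proof -
  have "\<sigma> y = \<sigma> z \<or> y = z"
    using sweep_flip[OF \<sigma> x yz(1) flip_y] sweep_flip[OF \<sigma> x yz(2) flip_z] by linarith
  then show ?thesis using permutes_inj_on[OF \<sigma>] yz by (auto dest: inj_onD)
qed

lemma sweep_step_bandwidth:
  assumes \<sigma>: "\<sigma> permutes {1..n}"
  shows "has_bandwidth n 1 (sweep_step n \<sigma> d)"
  unfolding has_bandwidth_def
proof (intro conjI ballI)
  note rank = sweep_rank_permutes[OF \<sigma>]
  show "sweep_step n \<sigma> d permutes {1..n}"
    unfolding sweep_step_def by (intro permutes_compose permutes_inv rank)
  fix k assume k: "k \<in> {1..n}"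
  define x where "x = inv (sweep_rank n \<sigma> d) k"
  have x: "x \<in> {1..n}" unfolding x_def using permutes_in_image[OF permutes_inv[OF rank]] k by blast
  have "sweep_rank n \<sigma> d x = k" unfolding x_def using permutes_inverses(1)[OF rank] by blast
  moreover have "sweep_step n \<sigma> d k = sweep_rank n \<sigma> (d + 1) x" by (simp add: sweep_step_def x_def)
  moreover have "\<bar>int (sweep_rank n \<sigma> (d + 1) x) - int (sweep_rank n \<sigma> d x)\<bar> \<le> 1"
    unfolding sweep_rank_def using sweep_flip_unique[OF \<sigma> x]
    by (intro order_rank_close[OF x]) blast
  ultimately show "\<bar>int (sweep_step n \<sigma> d k) - int k\<bar> \<le> int 1" by simp
qed

lemma sweep_step_id:
  assumes \<sigma>: "\<sigma> permutes {1..n}" and d: "d \<notin> inv_set n (inv \<sigma>)"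
  shows "sweep_step n \<sigma> d = id"
proof -
  have "sweep_rank n \<sigma> (d + 1) = sweep_rank n \<sigma> d"
    using sweep_flip_in_inv_set[OF \<sigma>] d
    unfolding sweep_rank_def order_rank_def by (intro ext) (metis (lifting))
  then show ?thesis
    using permutes_inv_o(1)[OF sweep_rank_permutes[OF \<sigma>]] by (simp add: sweep_step_def)
qed

lemma finite_inv_set: "finite (inv_set n \<pi>)"
proof (rule finite_subset)
  show "inv_set n \<pi> \<subseteq> (\<lambda>(i, j). int (\<pi> j) - int i) ` ({1..n} \<times> {1..n})"
    unfolding inv_set_def by force
qed simp

theorem theorem1p1:
  fixes n :: nat and \<pi> :: "nat \<Rightarrow> nat"
  assumes "n \<ge> 1" and "\<pi> permutes {1..n}"
  shows "\<exists>\<rho>s. length \<rho>s \<le> card (inv_set n \<pi>)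
           \<and> (\<forall>\<rho>\<in>set \<rho>s. has_bandwidth n 1 \<rho>)
           \<and> \<pi> = foldr (\<circ>) \<rho>s id"
proof -
  define \<sigma> where "\<sigma> = inv \<pi>"
  have \<sigma>: "\<sigma> permutes {1..n}" using permutes_inv[OF assms(2)] by (simp add: \<sigma>_def)
  have inv_\<sigma>: "inv \<sigma> = \<pi>" using inv_inv_eq[OF permutes_bij[OF assms(2)]] by (simp add: \<sigma>_def)
  define d0 where "d0 = 1 - int n"
  define T where "T = 2 * (n - 1)"
  define steps where "steps = rev (map (\<lambda>k. sweep_step n \<sigma> (d0 + int k)) [0..<T])"
  have "foldr (\<circ>) steps id \<circ> \<sigma> = id"
    using foldr_telescope[of "\<lambda>k. sweep_rank n \<sigma> (d0 + int k)" T] assms(1)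
      permutes_inj[OF sweep_rank_permutes[OF \<sigma>]] sweep_rank_start[OF \<sigma>] sweep_rank_end[OF \<sigma>]
    by (simp add: steps_def sweep_step_def d0_def T_def add.assoc of_nat_diff)
  then have product: "foldr (\<circ>) steps id = \<pi>"
    by (metis \<sigma>_def assms(2) comp_assoc comp_id id_comp permutes_inv_o(2))
  define \<rho>s where "\<rho>s = filter (\<lambda>f. f \<noteq> id) steps"
  have "length \<rho>s \<le> card (inv_set n \<pi>)"
    unfolding \<rho>s_def steps_def
    using finite_inv_set sweep_step_id[OF \<sigma>] inv_\<sigma>
    by (intro length_filter_nonid_le_card[where f = "\<lambda>k. d0 + int k"]) (auto intro: injI)
  moreover have "\<forall>\<rho>\<in>set \<rho>s. has_bandwidth n 1 \<rho>"
    using sweep_step_bandwidth[OF \<sigma>] by (auto simp: \<rho>s_def steps_def)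
  moreover have "\<pi> = foldr (\<circ>) \<rho>s id"
    using product by (simp add: \<rho>s_def foldr_filter_id)
  ultimately show ?thesis by blast
qed

end
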